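(* Let $S$ be a numerical semigroup and $G=G(S)=(V,E)$ its associated graph. Let $v_1\ne v_2\in V$ and suppose $v_2-v_1\in S$. Then $\deg(v_1)>\deg(v_2)$.
   Context: A numerical semigroup is a subset $S\subseteq\mathbb N$ containing $0$, closed under addition, with finite complement; $S^*=S\setminus\{0\}$, $m=\min S^*$, $X=\{s\in S^*: s-m\notin S\}$. The graph $G(S)$ has edge set all subsets $\{x,y\}\subseteq X$ ($x=y$ allowed) with $x+y\in X$, and vertex set $V$ the endvertices of these edges. For $x\in V$, $N_G(x)=\{y\in X: x+y\in X\}$ (which contains $x$ if $2x\in X$) and $\deg(x)=|N_G(x)|$. *)

theory Defs
  imports Main
begin

definition numerical_semigroup :: "nat set \<Rightarrow> bool" where
  "numerical_semigroup S \<longleftrightarrow> 0 \<in> S \<and> (\<forall>x\<in>S. \<forall>y\<in>S. x + y \<in> S) \<and> finite (UNIV - S)"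

definition multiplicity_ns :: "nat set \<Rightarrow> nat" where
  "multiplicity_ns S = Min (S - {0})"

text \<open>X = {s in S*. s - m not in S}  (s \<ge> m for all s in S*, so nat subtraction is exact)\<close>
definition X_set :: "nat set \<Rightarrow> nat set" where
  "X_set S = {s \<in> S - {0}. s - multiplicity_ns S \<notin> S}"

definition G_edges :: "nat set \<Rightarrow> nat set set" where
  "G_edges S = {{x, y} | x y. x \<in> X_set S \<and> y \<in> X_set S \<and> x + y \<in> X_set S}"

definition G_vertices :: "nat set \<Rightarrow> nat set" where
  "G_vertices S = \<Union> (G_edges S)"

definition G_nbhd :: "nat set \<Rightarrow> nat \<Rightarrow> nat set" where
  "G_nbhd S x = {y \<in> X_set S. x + y \<in> X_set S}"

definition G_deg :: "nat set \<Rightarrow> nat \<Rightarrow> nat" where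
  "G_deg S x = card (G_nbhd S x)"

end

theory Submission
  imports Defs
begin

text \<open>Write \<open>v\<^sub>2 = v\<^sub>1 + d\<close> with \<open>d \<in> S\<close>. The set \<open>X\<close> is closed under passing to partial
  sums inside \<open>S\<close>: if \<open>x \<in> X\<close> and \<open>x + s + t \<in> X\<close> with \<open>s, t \<in> S\<close>, then \<open>x + s \<in> X\<close>.
  Hence every neighbour of \<open>v\<^sub>2\<close> is a neighbour of \<open>v\<^sub>1\<close>, and if \<open>y\<close> is the largest neighbour
  of \<open>v\<^sub>2\<close> then \<open>y + d\<close> is a neighbour of \<open>v\<^sub>1\<close> that is too large to be a neighbour of \<open>v\<^sub>2\<close>.\<close>

lemma X_set_iff: "s \<in> X_set S \<longleftrightarrow> s \<in> S \<and> s \<noteq> 0 \<and> s - multiplicity_ns S \<notin> S"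
  by (simp add: X_set_def)

lemma numerical_semigroup_add:
  "numerical_semigroup S \<Longrightarrow> x \<in> S \<Longrightarrow> y \<in> S \<Longrightarrow> x + y \<in> S"
  by (simp add: numerical_semigroup_def)

lemma X_set_subset: "X_set S \<subseteq> S"
  by (auto simp: X_set_iff)

lemma multiplicity_less_X_set:
  assumes "0 \<in> S" and "s \<in> X_set S"
  shows "multiplicity_ns S < s"
proof (rule ccontr)
  assume "\<not> multiplicity_ns S < s"
  then have "s - multiplicity_ns S = 0" by simp
  with assms show False by (simp add: X_set_iff)
qed

lemma finite_X_set:
  assumes "numerical_semigroup S"
  shows "finite (X_set S)"
proof -
  let ?m = "multiplicity_ns S"
  have "X_set S \<subseteq> {..?m} \<union> (\<lambda>g. g + ?m) ` (UNIV - S)"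
  proof
    fix s assume s: "s \<in> X_set S"
    show "s \<in> {..?m} \<union> (\<lambda>g. g + ?m) ` (UNIV - S)"
    proof (cases "s \<le> ?m")
      case False
      then have "s = (s - ?m) + ?m" by simp
      moreover have "s - ?m \<in> UNIV - S" using s by (simp add: X_set_iff)
      ultimately show ?thesis by blast
    qed simp
  qed
  moreover have "finite (UNIV - S)" using assms by (simp add: numerical_semigroup_def)
  ultimately show ?thesis by (meson finite_Un finite_atMost finite_imageI finite_subset)
qed

lemma X_set_partial_sum:
  assumes S: "numerical_semigroup S"
    and x: "x \<in> X_set S" and s: "s \<in> S" and t: "t \<in> S"
    and sum: "x + s + t \<in> X_set S"
  shows "x + s \<in> X_set S"
proof -
  let ?m = "multiplicity_ns S"
  have "0 \<in> S" using S by (simp add: numerical_semigroup_def)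
  then have m_less: "?m < x + s" using multiplicity_less_X_set x by fastforce
  have xs: "x + s \<in> S" using S x s X_set_subset numerical_semigroup_add by blast
  have "x + s - ?m \<notin> S"
  proof
    assume "x + s - ?m \<in> S"
    then have "(x + s - ?m) + t \<in> S" using S t numerical_semigroup_add by blast
    moreover have "(x + s - ?m) + t = x + s + t - ?m" using m_less by simp
    ultimately show False using sum by (simp add: X_set_iff)
  qed
  then show ?thesis using xs m_less unfolding X_set_iff by linarith
qed

lemma finite_G_nbhd: "numerical_semigroup S \<Longrightarrow> finite (G_nbhd S v)"
  using finite_X_set by (simp add: G_nbhd_def)

lemma G_vertices_subset_X_set: "G_vertices S \<subseteq> X_set S"
  by (auto simp: G_vertices_def G_edges_def)

lemma G_nbhd_nonempty: "v \<in> G_vertices S \<Longrightarrow> G_nbhd S v \<noteq> {}"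
  by (auto simp: G_vertices_def G_edges_def G_nbhd_def add.commute)

lemma G_nbhd_add_subset:
  assumes S: "numerical_semigroup S" and v: "v \<in> S" and d: "d \<in> S"
  shows "G_nbhd S (v + d) \<subseteq> G_nbhd S v"
proof
  fix y assume "y \<in> G_nbhd S (v + d)"
  then have y: "y \<in> X_set S" and "y + v + d \<in> X_set S"
    by (auto simp: G_nbhd_def ac_simps)
  then have "y + v \<in> X_set S" using X_set_partial_sum[OF S y v d] by blast
  with y show "y \<in> G_nbhd S v" by (simp add: G_nbhd_def add.commute)
qed

lemma G_nbhd_add_shift:
  assumes S: "numerical_semigroup S" and v: "v \<in> S" and d: "d \<in> S"
    and y: "y \<in> G_nbhd S (v + d)"
  shows "y + d \<in> G_nbhd S v"
proof -
  have yX: "y \<in> X_set S" and "y + d + v \<in> X_set S"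
    using y by (auto simp: G_nbhd_def ac_simps)
  then have "y + d \<in> X_set S" using X_set_partial_sum[OF S yX d v] by blast
  with \<open>y + d + v \<in> X_set S\<close> show ?thesis by (simp add: G_nbhd_def add.commute)
qed

lemma G_deg_add_less:
  assumes S: "numerical_semigroup S" and v: "v \<in> S" and d: "d \<in> S" "0 < d"
    and ne: "G_nbhd S (v + d) \<noteq> {}"
  shows "G_deg S (v + d) < G_deg S v"
proof -
  define M where "M = Max (G_nbhd S (v + d))"
  have fin: "finite (G_nbhd S (v + d))" using S finite_G_nbhd by blast
  then have "M \<in> G_nbhd S (v + d)" using ne by (simp add: M_def)
  then have new: "M + d \<in> G_nbhd S v" using G_nbhd_add_shift[OF S v d(1)] by blast
  have "M + d \<notin> G_nbhd S (v + d)"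
    using fin Max_ge d(2) by (fastforce simp: M_def)
  with new have "G_nbhd S (v + d) \<subset> G_nbhd S v"
    using G_nbhd_add_subset[OF S v d(1)] by blast
  then show ?thesis
    unfolding G_deg_def using S finite_G_nbhd psubset_card_mono by blast
qed

theorem proposition4p7:
  fixes S :: "nat set" and v1 v2 :: nat
  assumes "numerical_semigroup S"
    and "v1 \<in> G_vertices S" and "v2 \<in> G_vertices S"
    and "v1 \<noteq> v2"
    and "v1 \<le> v2" and "v2 - v1 \<in> S"
  shows "G_deg S v1 > G_deg S v2"
proof -
  have v1: "v1 \<in> S" using assms(2) G_vertices_subset_X_set X_set_subset by blast
  have v2: "v2 = v1 + (v2 - v1)" using assms(5) by simp
  have "G_nbhd S (v1 + (v2 - v1)) \<noteq> {}"
    using G_nbhd_nonempty[OF assms(3)] v2 by simp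
  then have "G_deg S (v1 + (v2 - v1)) < G_deg S v1"
    using G_deg_add_less[OF assms(1) v1 assms(6)] assms(4,5) by simp
  with v2 show ?thesis by simp
qed

end
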